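(* Let $\Omega$ be a finite set with $n=|\Omega|$, $V_\Omega=\mathbb{R}^\Omega$, and $V_\Upsilon,V_\Gamma\le V_\Omega$. Let $\mathcal{P}$, $\mathcal{Q}$, $\mathcal{R}$ be orthogonal decompositions of $V_\Omega$, $V_\Upsilon$, $V_\Gamma$, respectively, each containing $\mathbf{P}_0=\mathbf{Q}_0=\mathbf{R}_0=n^{-1}\mathbf{J}$, such that $\mathcal{Q}$ and $\mathcal{R}$ are both structure balanced in relation to $\mathcal{P}$. Suppose that either (A) $\mathbf{QPR}=\mathbf{0}$ for all $\mathbf{P}\in\mathcal{P}\setminus\{\mathbf{P}_0\}$, all $\mathbf{Q}\in\mathcal{Q}$ and all $\mathbf{R}\in\mathcal{R}$; or (B) for all $\mathbf{P}\in\mathcal{P}$, $\mathbf{Q}\in\mathcal{Q}$ and $\mathbf{R}\in\mathcal{R}$, if $\mathbf{PQ}$ and $\mathbf{PR}$ are both nonzero then $\mathbf{P}\vartriangleright\mathbf{Q}=\mathbf{P}$ or $\mathbf{P}\vartriangleright\mathbf{R}=\mathbf{P}$. Then the decomposition $\mathcal{P}\vartriangleright\mathcal{Q}$ is compatible with the decomposition $\mathcal{P}\vartriangleright\mathcal{R}$, i.e. $\mathbf{BC}=\mathbf{CB}$ for all $\mathbf{B}\in\mathcal{P}\vartriangleright\mathcal{Q}$ and $\mathbf{C}\in\mathcal{P}\vartriangleright\mathcal{R}$.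
   Context: $\mathbf{J}$ is the $n\times n$ all-ones matrix. $V_\Omega$ carries the standard inner product; all matrices are $\Omega\times\Omega$. An orthogonal decomposition of a subspace $W\le V_\Omega$ is a finite set of nonzero symmetric idempotent matrices that are mutually orthogonal and whose sum is the orthogonal projector onto $W$; zero matrices are discarded from listed decompositions. For projectors $\mathbf{A},\mathbf{B}$: $\mathbf{B}$ has first-order balance in relation to $\mathbf{A}$ if $\mathbf{BAB}=\lambda_{\mathbf{AB}}\mathbf{B}$ for a scalar $\lambda_{\mathbf{AB}}$; $\lambda_{\mathbf{AB}}=0$ iff $\mathbf{AB}=\mathbf{0}$; if $\lambda_{\mathbf{AB}}\ne0$, $\mathbf{A}\vartriangleright\mathbf{B}=\lambda_{\mathbf{AB}}^{-1}\mathbf{ABA}$. $\mathcal{B}$ is structure balanced in relation to $\mathcal{A}$ if every $\mathbf{B}\in\mathcal{B}$ has first-order balance in relation to every $\mathbf{A}\in\mathcal{A}$, and $\mathbf{B}_1\mathbf{A}\mathbf{B}_2=\mathbf{0}$ for all $\mathbf{A}\in\mathcal{A}$ and distinct $\mathbf{B}_1,\mathbf{B}_2\in\mathcal{B}$. Then $\mathbf{A}\vdash\mathcal{B}=\mathbf{A}-\sum'_{\mathbf{B}}\mathbf{A}\vartriangleright\mathbf{B}$ (sum over $\mathbf{B}$ with $\lambda_{\mathbf{AB}}\ne0$) and $\mathcal{A}\vartriangleright\mathcal{B}=\{\mathbf{A}\vartriangleright\mathbf{B}:\mathbf{A}\in\mathcal{A},\mathbf{B}\in\mathcal{B},\lambda_{\mathbf{AB}}\neq0\}\cup\{\mathbf{A}\vdash\mathcal{B}:\mathbf{A}\in\mathcal{A}\}$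 (zeros discarded). *)

theory Defs
  imports "HOL-Analysis.Analysis"
begin

text \<open>Omega is the finite index type 'n; matrices are real^'n^'n.\<close>

definition all_ones :: "real^'n^'n" where
  "all_ones = (\<chi> i j. 1)"

definition is_proj :: "real^'n^'n \<Rightarrow> bool" where
  "is_proj P \<longleftrightarrow> transpose P = P \<and> P ** P = P"

definition orth_projector_onto :: "(real^'n) set \<Rightarrow> real^'n^'n \<Rightarrow> bool" where
  "orth_projector_onto W P \<longleftrightarrow> is_proj P \<and> range (\<lambda>x. P *v x) = W"

definition orth_decomp :: "(real^'n) set \<Rightarrow> (real^'n^'n) set \<Rightarrow> bool" where
  "orth_decomp W D \<longleftrightarrow> finite D \<and> 0 \<notin> D \<and> (\<forall>A\<in>D. is_proj A)
     \<and> (\<forall>A\<in>D. \<forall>B\<in>D. A \<noteq> B \<longrightarrow> A ** B = 0)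
     \<and> orth_projector_onto W (\<Sum>A\<in>D. A)"

definition first_order_balance :: "real^'n^'n \<Rightarrow> real^'n^'n \<Rightarrow> bool" where
  "first_order_balance B A \<longleftrightarrow> (\<exists>l. B ** A ** B = l *\<^sub>R B)"

definition lam :: "real^'n^'n \<Rightarrow> real^'n^'n \<Rightarrow> real" where
  "lam A B = (SOME l. B ** A ** B = l *\<^sub>R B)"

definition tri :: "real^'n^'n \<Rightarrow> real^'n^'n \<Rightarrow> real^'n^'n" where
  "tri A B = inverse (lam A B) *\<^sub>R (A ** B ** A)"

definition structure_balanced :: "(real^'n^'n) set \<Rightarrow> (real^'n^'n) set \<Rightarrow> bool" where
  "structure_balanced Bs As \<longleftrightarrow>
     (\<forall>B\<in>Bs. \<forall>A\<in>As. first_order_balance B A)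
     \<and> (\<forall>A\<in>As. \<forall>B1\<in>Bs. \<forall>B2\<in>Bs. B1 \<noteq> B2 \<longrightarrow> B1 ** A ** B2 = 0)"

definition turnstile :: "real^'n^'n \<Rightarrow> (real^'n^'n) set \<Rightarrow> real^'n^'n" where
  "turnstile A Bs = A - (\<Sum>B\<in>{B\<in>Bs. lam A B \<noteq> 0}. tri A B)"

definition tri_set :: "(real^'n^'n) set \<Rightarrow> (real^'n^'n) set \<Rightarrow> (real^'n^'n) set" where
  "tri_set As Bs =
     ({tri A B | A B. A \<in> As \<and> B \<in> Bs \<and> lam A B \<noteq> 0}
      \<union> {turnstile A Bs | A. A \<in> As}) - {0}"

end

theory Submission
  imports Defs
begin

text \<open>Every member of \<open>\<P> \<rhd> \<Q>\<close> lies in the span of some \<open>P \<in> \<P>\<close> together with the compressions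
  \<open>PQP\<close>, \<open>Q \<in> \<Q>\<close>; members built from different \<open>P\<close> multiply to zero since \<open>\<P>\<close> is orthogonal.
  So it suffices that, for a fixed \<open>P\<close>, every \<open>PQP\<close> commutes with every \<open>PRP\<close>. Under (A) this
  holds because \<open>P\<^sub>0\<close> has rank one, so \<open>P\<^sub>0XP\<^sub>0\<close> is a multiple of \<open>P\<^sub>0\<close>, while for \<open>P \<noteq> P\<^sub>0\<close> both
  products \<open>P(QPR)P\<close> and \<open>P(RPQ)P = P(QPR)\<^sup>TP\<close> vanish. Under (B) one of the two compressions
  is a multiple of \<open>P\<close> or one of them is zero.\<close>

lemma matrix_add_rdistrib:
  fixes A B :: "'a::semiring_1^'n^'m"
  shows "(A + B) ** C = A ** C + B ** C"
  by (vector matrix_matrix_mult_def sum.distrib[symmetric] field_simps)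

lemma all_ones_sandwich:
  "all_ones ** X ** all_ones = (\<Sum>k\<in>UNIV. \<Sum>l\<in>UNIV. X$l$k) *\<^sub>R (all_ones::real^'n::finite^'n)"
  by (simp add: matrix_matrix_mult_def vec_eq_iff all_ones_def sum_distrib_right)

lemma commute_with_span:
  fixes M :: "real^'n::finite^'n"
  assumes "X \<in> span S" and "\<And>Y. Y \<in> S \<Longrightarrow> Y ** M = M ** Y"
  shows "X ** M = M ** X"
  using assms(1)
proof (induction rule: span_induct_alt)
  case (step c Y Z)
  then show ?case
    using assms(2) by (simp add: matrix_add_rdistrib matrix_add_ldistrib
        matrix_scalar_ac scalar_matrix_assoc[symmetric])
qed simp

lemma spans_commute:
  fixes X Y :: "real^'n::finite^'n"
  assumes "X \<in> span S" and "Y \<in> span T"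
    and "\<And>A B. A \<in> S \<Longrightarrow> B \<in> T \<Longrightarrow> A ** B = B ** A"
  shows "X ** Y = Y ** X"
proof -
  have "A ** Y = Y ** A" if "A \<in> S" for A
    using commute_with_span[OF assms(2)] assms(3) that by metis
  then show ?thesis
    using commute_with_span[OF assms(1)] by metis
qed

lemma compression_absorbs_idempotent:
  assumes "P ** P = P"
  shows "P ** (P ** Z ** P) = P ** Z ** P" and "(P ** Z ** P) ** P = P ** Z ** P"
  by (metis assms matrix_mul_assoc)+

definition compression_span :: "real^'n^'n \<Rightarrow> (real^'n^'n) set \<Rightarrow> (real^'n^'n) set" where
  "compression_span P D = span (insert P ((\<lambda>Q. P ** Q ** P) ` D))"

lemma tri_set_subset_compression_span:
  assumes "B \<in> tri_set PP QQ"
  shows "\<exists>P\<in>PP. B \<in> compression_span P QQ"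
proof -
  have tri: "tri A Q \<in> compression_span A QQ" if "Q \<in> QQ" for A Q
    using that by (auto simp: tri_def compression_span_def intro: span_mul span_base)
  have "turnstile A QQ \<in> compression_span A QQ" for A
    using tri unfolding turnstile_def compression_span_def
    by (intro span_diff span_sum) (auto intro: span_base)
  with tri show ?thesis
    using assms unfolding tri_set_def by blast
qed

lemma compression_span_fixed:
  assumes "P ** P = P" and "X \<in> compression_span P D"
  shows "P ** X ** P = X"
  using assms(2) unfolding compression_span_def
proof (induction rule: span_induct_alt)
  case (step c Y Z)
  have "P ** Y ** P = Y"
    using step(1) assms(1) compression_absorbs_idempotent[OF assms(1)] by auto
  with step(2) show ?case
    by (simp add: matrix_add_rdistrib matrix_add_ldistrib matrix_scalar_ac scalar_matrix_assoc[symmetric])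
qed simp

lemma compression_spans_orthogonal:
  assumes "P ** P = P" "P' ** P' = P'" "P ** P' = 0"
    and "X \<in> compression_span P D" "Y \<in> compression_span P' E"
  shows "X ** Y = 0"
proof -
  have "X ** Y = (P ** X ** P) ** (P' ** Y ** P')"
    using compression_span_fixed assms by metis
  also have "\<dots> = P ** X ** (P ** P') ** Y ** P'"
    by (simp add: matrix_mul_assoc)
  finally show ?thesis
    using assms(3) by simp
qed

lemma compression_spans_commute:
  assumes "P ** P = P"
    and "\<And>Q R. Q \<in> D \<Longrightarrow> R \<in> E \<Longrightarrow> (P ** Q ** P) ** (P ** R ** P) = (P ** R ** P) ** (P ** Q ** P)"
    and "X \<in> compression_span P D" "Y \<in> compression_span P E"
  shows "X ** Y = Y ** X"
  using assms(3,4) unfolding compression_span_def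
  by (rule spans_commute) (auto simp: compression_absorbs_idempotent[OF assms(1)] assms(1) intro: assms(2))

lemma compression_scalar_if_tri_eq:
  assumes "P \<noteq> 0" and "tri P Q = P"
  shows "P ** Q ** P = lam P Q *\<^sub>R P"
proof -
  have "lam P Q \<noteq> 0"
    using assms by (auto simp: tri_def)
  then have "P ** Q ** P = lam P Q *\<^sub>R tri P Q"
    by (simp add: tri_def)
  with assms(2) show ?thesis
    by simp
qed

lemma compressions_commute:
  fixes P Q R :: "real^'n::finite^'n"
  assumes P: "is_proj P" and Q: "is_proj Q" and R: "is_proj R" and "P \<noteq> 0"
    and cases: "(\<exists>c. P = c *\<^sub>R all_ones) \<or> Q ** P ** R = 0 \<or> P ** Q = 0 \<or> P ** R = 0
      \<or> tri P Q = P \<or> tri P R = P"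
  shows "(P ** Q ** P) ** (P ** R ** P) = (P ** R ** P) ** (P ** Q ** P)"
proof -
  have PP: "P ** P = P" using P by (simp add: is_proj_def)
  have sandwich: "(P ** X ** P) ** (P ** Y ** P) = P ** (X ** P ** Y) ** P" for X Y
    by (metis compression_absorbs_idempotent(2)[OF PP] matrix_mul_assoc)
  have "transpose (Q ** P ** R) = R ** P ** Q"
    using P Q R by (simp add: is_proj_def matrix_transpose_mul matrix_mul_assoc)
  from cases consider (rank_one) c where "P = c *\<^sub>R all_ones" | (orth) "Q ** P ** R = 0"
    | (Q0) "P ** Q = 0" | (R0) "P ** R = 0" | (Qs) "tri P Q = P" | (Rs) "tri P R = P"
    by blast
  then show ?thesis
  proof cases
    case rank_one
    then show ?thesis
      by (simp add: matrix_scalar_ac scalar_matrix_assoc[symmetric] all_ones_sandwich)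
  next
    case orth
    then have "R ** P ** Q = 0"
      using \<open>transpose (Q ** P ** R) = R ** P ** Q\<close> by (simp add: transpose_def vec_eq_iff)
    with orth show ?thesis
      by (simp add: sandwich)
  qed (use compression_scalar_if_tri_eq[OF \<open>P \<noteq> 0\<close>] in
      \<open>simp_all add: matrix_scalar_ac scalar_matrix_assoc[symmetric] compression_absorbs_idempotent PP\<close>)
qed

theorem theorem3:
  fixes PP QQ RR :: "(real^'n::finite^'n) set"
    and U G :: "(real^'n) set"
  assumes "subspace U" and "subspace G"
    and "orth_decomp UNIV PP" and "orth_decomp U QQ" and "orth_decomp G RR"
    and "(1 / real CARD('n)) *\<^sub>R all_ones \<in> PP"
    and "(1 / real CARD('n)) *\<^sub>R all_ones \<in> QQ"
    and "(1 / real CARD('n)) *\<^sub>R all_ones \<in> RR"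
    and "structure_balanced QQ PP" and "structure_balanced RR PP"
    and "(\<forall>P\<in>PP - {(1 / real CARD('n)) *\<^sub>R all_ones}. \<forall>Q\<in>QQ. \<forall>R\<in>RR. Q ** P ** R = 0)
         \<or> (\<forall>P\<in>PP. \<forall>Q\<in>QQ. \<forall>R\<in>RR. P ** Q \<noteq> 0 \<and> P ** R \<noteq> 0
               \<longrightarrow> tri P Q = P \<or> tri P R = P)"
  shows "\<forall>B\<in>tri_set PP QQ. \<forall>C\<in>tri_set PP RR. B ** C = C ** B"
proof (intro ballI)
  fix B C
  assume "B \<in> tri_set PP QQ" and "C \<in> tri_set PP RR"
  then obtain P P' where P: "P \<in> PP" "B \<in> compression_span P QQ"
    and P': "P' \<in> PP" "C \<in> compression_span P' RR"
    using tri_set_subset_compression_span by metis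
  have idem: "A ** A = A" if "A \<in> PP" for A
    using assms(3) that by (auto simp: orth_decomp_def is_proj_def)
  show "B ** C = C ** B"
  proof (cases "P = P'")
    case True
    have "(P ** Q ** P) ** (P ** R ** P) = (P ** R ** P) ** (P ** Q ** P)"
      if "Q \<in> QQ" "R \<in> RR" for Q R
    proof (rule compressions_commute)
      show "is_proj P" "is_proj Q" "is_proj R" "P \<noteq> 0"
        using assms(3-5) P(1) that by (auto simp: orth_decomp_def)
      show "(\<exists>c. P = c *\<^sub>R all_ones) \<or> Q ** P ** R = 0 \<or> P ** Q = 0 \<or> P ** R = 0
          \<or> tri P Q = P \<or> tri P R = P"
        using assms(11) P(1) that by blast
    qed
    then show ?thesis
      using compression_spans_commute[OF idem[OF P(1)]] P P' True by blast
  next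
    case False
    then have "P ** P' = 0" "P' ** P = 0"
      using assms(3) P(1) P'(1) by (auto simp: orth_decomp_def)
    then show ?thesis
      using compression_spans_orthogonal idem P P' by metis
  qed
qed

end
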